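(* For every $\beta>0$, every $\lambda\in(0,n)$ with $n\ge\lambda\ge\frac{16}{9}\log\frac2\beta$, every $r\in\mathbb{N}$ and every $X=(x_1,\dots,x_n)\in[0,1]^n$, \[ \Pr\left[\left|P^{\mathbb{R}}_{n,\lambda,r}(X)-\sum_{i=1}^n x_i\right|\ge\frac{\sqrt2}{r}\sqrt{n\log\frac2\beta}+\frac{n}{n-\lambda}\sqrt{2\frac{\lambda}{r}\log\frac2\beta}\right]<2\beta. \]
   Context: Bit randomizer $R^{0/1}_{n,\lambda}(b)$, $b\in\{0,1\}$, $\lambda\in(0,n)$: draw $\mathbf{b}\sim\mathrm{Ber}(\lambda/n)$; output $b$ if $\mathbf{b}=0$, a fresh $\mathrm{Ber}(1/2)$ bit if $\mathbf{b}=1$. Encoder $E_r(x)$, $x\in[0,1]$: $\mu=\lceil xr\rceil$, $p=xr-\mu+1$, and for $j=1,\dots,r$: $b_j=1$ if $j<\mu$, $b_j\sim\mathrm{Ber}(p)$ if $j=\mu$, $b_j=0$ if $j>\mu$. Real-sum protocol $P^{\mathbb{R}}_{n,\lambda,r}$: user $i$ computes $(b_{i,1},\dots,b_{i,r})=E_r(x_i)$ and sends the $r$ messages $y_{i,j}=R^{0/1}_{n,\lambda}(b_{i,j})$ (all randomness independent); the $nr$ messages are shuffled uniformly at random; the analyzer outputs $\frac1r\cdot\frac{n}{n-\lambda}\left(\sum_j\sum_i y_{i,j}-\frac{\lambda r}{2}\right)$. $\log$ is the natural logarithm. *)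

theory Defs
  imports "HOL-Probability.Probability"
begin

fun seq_pmf :: "'a pmf list \<Rightarrow> 'a list pmf" where
  "seq_pmf [] = return_pmf []"
| "seq_pmf (p # ps) = do { x \<leftarrow> p; xs \<leftarrow> seq_pmf ps; return_pmf (x # xs) }"

definition randomizer :: "nat \<Rightarrow> real \<Rightarrow> bool \<Rightarrow> bool pmf" where
  "randomizer n lam b = do {
     c \<leftarrow> bernoulli_pmf (lam / real n);
     if c then bernoulli_pmf (1/2) else return_pmf b }"

definition encoder :: "nat \<Rightarrow> real \<Rightarrow> bool list pmf" where
  "encoder r x = (let mu = \<lceil>x * real r\<rceil>; p = x * real r - of_int mu + 1 in
     seq_pmf (map (\<lambda>j::nat. if int j < mu then return_pmf True
                            else if int j = mu then bernoulli_pmf p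
                            else return_pmf False) [1..<r+1]))"

definition user_msgs :: "nat \<Rightarrow> real \<Rightarrow> nat \<Rightarrow> real \<Rightarrow> bool list pmf" where
  "user_msgs n lam r x = do { bs \<leftarrow> encoder r x; seq_pmf (map (randomizer n lam) bs) }"

definition shuffle :: "'a list \<Rightarrow> 'a list pmf" where
  "shuffle ys = do {
     \<sigma> \<leftarrow> pmf_of_set {\<sigma>. \<sigma> permutes {..<length ys}};
     return_pmf (map (\<lambda>k. ys ! \<sigma> k) [0..<length ys]) }"

definition analyzer :: "nat \<Rightarrow> real \<Rightarrow> nat \<Rightarrow> bool list \<Rightarrow> real" where
  "analyzer n lam r ys = (1 / real r) * (real n / (real n - lam)) *
     ((\<Sum>y\<leftarrow>ys. if y then 1 else 0) - lam * real r / 2)"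

definition real_sum_protocol :: "nat \<Rightarrow> real \<Rightarrow> nat \<Rightarrow> real list \<Rightarrow> real pmf" where
  "real_sum_protocol n lam r X = do {
     yss \<leftarrow> seq_pmf (map (user_msgs n lam r) X);
     zs \<leftarrow> shuffle (concat yss);
     return_pmf (analyzer n lam r zs) }"

end

theory Submission
  imports Defs
begin

(* The analyzer's error is exactly E / r + n / ((n - lam) r) * R, where E = sum_i (sum_j b_ij - r x_i)
   is the total encoding error and R = sum_ij (y_ij - E[y_ij | b_ij]) the total randomization error.
   For fixed x only one bit of E_r(x) is random, so each user's encoding error is a centred Bernoulli
   variable and Hoeffding's lemma makes E sub-Gaussian with variance proxy n/4.  Each of the n r
   randomization terms is a centred Bernoulli variable with parameter lam/(2n) or 1 - lam/(2n), whose
   moment generating function is at most exp (lam s^2 / (2n)) for |s| <= 11/10; hence R is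
   sub-Gaussian with proxy lam r in that range of s.  The Chernoff bound gives the tails 2 (beta/2)^4
   and beta for the two parts of the threshold, and their sum is less than 2 beta. *)

lemma exp_le_one_plus_self_plus_square:
  fixes s :: real
  assumes "\<bar>s\<bar> \<le> 11/10"
  shows "exp s \<le> 1 + s + s\<^sup>2"
proof -
  obtain t where "\<bar>t\<bar> \<le> \<bar>s\<bar>"
    and taylor: "exp s = (\<Sum>m<4. s ^ m / fact m) + exp t / fact 4 * s ^ 4"
    using Maclaurin_exp_le[of s 4] by blast
  have "exp (11/20 :: real) \<le> 1 + 11/20 + (11/20)\<^sup>2"
    by (rule exp_bound) auto
  then have "exp (11/20 :: real) * exp (11/20) \<le> 19/10 * (19/10)"
    by (intro mult_mono) (auto simp: power2_eq_square)
  moreover have "exp t \<le> exp (11/20) * exp (11/20)"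
    using \<open>\<bar>t\<bar> \<le> \<bar>s\<bar>\<close> assms by (simp flip: exp_add)
  moreover have "s\<^sup>2 \<le> (11/10)\<^sup>2"
    using power_mono[OF assms, of 2] by simp
  ultimately have "exp t * s\<^sup>2 \<le> 361/100 * (121/100)"
    by (intro mult_mono) (auto simp: power2_eq_square)
  then have "s/6 + exp t / 24 * s\<^sup>2 \<le> 1/2"
    using assms by simp
  then have "s\<^sup>2 * (s/6 + exp t / 24 * s\<^sup>2) \<le> s\<^sup>2 * (1/2)"
    by (rule mult_left_mono) simp
  then show ?thesis
    using taylor by (simp add: lessThan_nat_numeral fact_numeral eval_nat_numeral field_simps)
qed

lemma bernoulli_pmf_0: "bernoulli_pmf 0 = return_pmf False"
  by (rule pmf_eqI) (simp split: split_indicator)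

lemma nn_integral_bernoulli_centered_exp:
  assumes "0 \<le> q" "q \<le> 1"
  shows "(\<integral>\<^sup>+b. ennreal (exp (s * (of_bool b - q))) \<partial>bernoulli_pmf q)
           = ennreal (q * exp (s * (1 - q)) + (1 - q) * exp (- s * q))"
  using assms by (simp add: ennreal_mult' ennreal_plus mult.commute)

lemma nn_integral_bernoulli_centered_exp_le_hoeffding:
  assumes "0 \<le> q" "q \<le> 1"
  shows "(\<integral>\<^sup>+b. ennreal (exp (s * (of_bool b - q))) \<partial>bernoulli_pmf q) \<le> ennreal (exp (s\<^sup>2 / 8))"
proof -
  \<comment> \<open>The library's Hoeffding lemma needs \<open>s > 0\<close>; negative \<open>s\<close> are covered by the negated bit.\<close>
  have "(\<integral>\<^sup>+b. ennreal (exp (s * (f b - measure_pmf.expectation (bernoulli_pmf q) f))) \<partial>bernoulli_pmf q)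
          \<le> ennreal (exp (s\<^sup>2 / 8))"
    if "s > 0" and f: "f = of_bool \<or> f = (\<lambda>b. - of_bool b)" for s and f :: "bool \<Rightarrow> real"
  proof -
    have "f b \<in> {min (f False) (f True)..max (f False) (f True)}" for b
      by (cases b) auto
    then interpret interval_bounded_random_variable
        "bernoulli_pmf q" f "min (f False) (f True)" "max (f False) (f True)"
      by unfold_locales auto
    have "\<bar>f True - f False\<bar> = 1"
      using f by auto
    then have "(max (f False) (f True) - min (f False) (f True))\<^sup>2 = 1"
      by (simp add: max_def min_def power2_eq_square abs_if split: if_splits)
    then show ?thesis
      using Hoeffdings_lemma_nn_integral[OF \<open>s > 0\<close>] by simp
  qed
  from this[of s of_bool] this[of "- s" "\<lambda>b. - of_bool b"] show ?thesis
    using assms by (cases s "0::real" rule: linorder_cases) (simp_all add: algebra_simps)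
qed

(* The range |s| <= 11/10 is what the hypothesis lam >= 16/9 log (2/beta) allows: the Chernoff
   parameter used for the randomization error is at most sqrt (9/8). *)
lemma nn_integral_bernoulli_centered_exp_le:
  assumes "0 \<le> q" "q \<le> 1" "\<bar>s\<bar> \<le> 11/10"
  shows "(\<integral>\<^sup>+b. ennreal (exp (s * (of_bool b - q))) \<partial>bernoulli_pmf q)
           \<le> ennreal (exp (min q (1 - q) * s\<^sup>2))"
proof -
  have bound: "q * exp (s * (1 - q)) + (1 - q) * exp (- s * q) \<le> exp (q * s\<^sup>2)"
    if "0 \<le> q" "q \<le> 1" "\<bar>s\<bar> \<le> 11/10" for q s :: real
  proof -
    have "q * exp (s * (1 - q)) + (1 - q) * exp (- s * q) = exp (- s * q) * (1 + q * (exp s - 1))"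
      by (simp add: algebra_simps flip: exp_add)
    also have "\<dots> \<le> exp (- s * q) * (1 + q * (s + s\<^sup>2))"
      using exp_le_one_plus_self_plus_square[OF \<open>\<bar>s\<bar> \<le> 11/10\<close>] \<open>0 \<le> q\<close>
      by (intro mult_left_mono add_left_mono) auto
    also have "\<dots> \<le> exp (- s * q) * exp (q * (s + s\<^sup>2))"
      by (intro mult_left_mono exp_ge_add_one_self) simp
    also have "\<dots> = exp (q * s\<^sup>2)"
      by (simp add: algebra_simps flip: exp_add)
    finally show ?thesis .
  qed
  have "q * exp (s * (1 - q)) + (1 - q) * exp (- s * q) \<le> exp (min q (1 - q) * s\<^sup>2)"
    using bound[of q s] bound[of "1 - q" "- s"] assms by (simp add: min_def algebra_simps)
  then show ?thesis
    unfolding nn_integral_bernoulli_centered_exp[OF assms(1,2)] by simp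
qed

lemma map2_eq_map_right: "length xs = length ys \<Longrightarrow> map2 (\<lambda>_. f) xs ys = map f ys"
  by (induction xs ys rule: list_induct2) auto

lemma set_seq_pmf: "xs \<in> set_pmf (seq_pmf ps) \<Longrightarrow> list_all2 (\<lambda>x p. x \<in> set_pmf p) xs ps"
  by (induction ps arbitrary: xs) auto

lemma seq_pmf_map_map_pmf: "seq_pmf (map (map_pmf f) ps) = map_pmf (map f) (seq_pmf ps)"
  by (induction ps) (simp_all add: map_pmf_def bind_assoc_pmf bind_return_pmf)

lemma seq_pmf_replicate_return_pmf: "seq_pmf (replicate k (return_pmf x)) = return_pmf (replicate k x)"
  by (induction k) (simp_all add: bind_return_pmf)

lemma seq_pmf_append:
  "seq_pmf (ps @ qs) = do { xs \<leftarrow> seq_pmf ps; ys \<leftarrow> seq_pmf qs; return_pmf (xs @ ys) }"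
  by (induction ps) (simp_all add: bind_assoc_pmf bind_return_pmf bind_return_pmf')

lemma nn_integral_seq_pmf_prod_list:
  "(\<integral>\<^sup>+ws. prod_list (map2 G xs ws) \<partial>seq_pmf (map f xs)) = prod_list (map (\<lambda>x. \<integral>\<^sup>+w. G x w \<partial>f x) xs)"
proof (induction xs)
  case (Cons x xs)
  have "(\<integral>\<^sup>+ws. prod_list (map2 G (x # xs) ws) \<partial>seq_pmf (map f (x # xs)))
      = (\<integral>\<^sup>+w. G x w * (\<integral>\<^sup>+ws. prod_list (map2 G xs ws) \<partial>seq_pmf (map f xs)) \<partial>f x)"
    by (simp add: nn_integral_cmult)
  then show ?case
    by (simp add: Cons.IH nn_integral_multc)
qed simp

lemma prod_list_le_power:
  fixes g :: "'a \<Rightarrow> ennreal"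
  shows "(\<And>x. x \<in> set xs \<Longrightarrow> g x \<le> K) \<Longrightarrow> prod_list (map g xs) \<le> K ^ length xs"
  by (induction xs) (auto intro!: mult_mono)

lemma ennreal_exp_sum_list: "ennreal (exp (sum_list xs)) = prod_list (map (\<lambda>x. ennreal (exp x)) xs)"
  by (induction xs) (simp_all add: exp_add ennreal_mult)

lemma nn_integral_exp_sum_seq_pmf_le:
  fixes f :: "'a \<Rightarrow> 'b pmf"
  assumes "\<And>x. x \<in> set xs \<Longrightarrow> (\<integral>\<^sup>+w. ennreal (exp (F x w)) \<partial>f x) \<le> ennreal K"
  shows "(\<integral>\<^sup>+ws. ennreal (exp (sum_list (map2 F xs ws))) \<partial>seq_pmf (map f xs)) \<le> ennreal K ^ length xs"
proof -
  have "(\<integral>\<^sup>+ws. ennreal (exp (sum_list (map2 F xs ws))) \<partial>seq_pmf (map f xs))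
      = (\<integral>\<^sup>+ws. prod_list (map2 (\<lambda>x w. ennreal (exp (F x w))) xs ws) \<partial>seq_pmf (map f xs))"
    by (simp add: ennreal_exp_sum_list split_def o_def)
  also have "\<dots> = prod_list (map (\<lambda>x. \<integral>\<^sup>+w. ennreal (exp (F x w)) \<partial>f x) xs)"
    by (rule nn_integral_seq_pmf_prod_list)
  also have "\<dots> \<le> ennreal K ^ length xs"
    using assms by (rule prod_list_le_power)
  finally show ?thesis .
qed

lemma prob_ge_le_exp_moment:
  fixes M :: "'a pmf" and F :: "'a \<Rightarrow> real"
  assumes "0 \<le> s" and mgf: "(\<integral>\<^sup>+x. ennreal (exp (s * F x)) \<partial>M) \<le> ennreal (exp a)"
  shows "measure_pmf.prob M {x. t \<le> F x} \<le> exp (a - s * t)"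
proof -
  have "indicator {x. t \<le> F x} x \<le> ennreal (exp (s * F x)) * ennreal (exp (- s * t))" for x
  proof (cases "t \<le> F x")
    case True
    then have "1 \<le> exp (s * F x - s * t)"
      using \<open>0 \<le> s\<close> by (simp add: right_diff_distrib[symmetric])
    then show ?thesis
      using True by (simp add: exp_diff ennreal_mult'[symmetric] divide_inverse exp_minus)
  qed simp
  then have "emeasure M {x. t \<le> F x} \<le> (\<integral>\<^sup>+x. ennreal (exp (s * F x)) * ennreal (exp (- s * t)) \<partial>M)"
    by (simp add: nn_integral_mono flip: nn_integral_indicator)
  also have "\<dots> = (\<integral>\<^sup>+x. ennreal (exp (s * F x)) \<partial>M) * ennreal (exp (- s * t))"
    by (simp add: nn_integral_multc)
  also have "\<dots> \<le> ennreal (exp a) * ennreal (exp (- s * t))"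
    using mgf by (rule mult_right_mono) simp
  also have "\<dots> = ennreal (exp (a - s * t))"
    by (simp add: ennreal_mult'[symmetric] exp_diff exp_minus divide_inverse)
  finally show ?thesis
    by (simp add: measure_pmf.emeasure_eq_measure)
qed

lemma prob_abs_ge_le_sub_gaussian:
  fixes M :: "'a pmf" and F :: "'a \<Rightarrow> real"
  assumes "0 < v" "0 \<le> t"
    and mgf: "\<And>s. \<bar>s\<bar> = t / v \<Longrightarrow> (\<integral>\<^sup>+x. ennreal (exp (s * F x)) \<partial>M) \<le> ennreal (exp (v * s\<^sup>2 / 2))"
  shows "measure_pmf.prob M {x. t \<le> \<bar>F x\<bar>} \<le> 2 * exp (- t\<^sup>2 / (2 * v))"
proof -
  define s where "s = t / v"
  have s: "0 \<le> s" "v * s\<^sup>2 / 2 - s * t = - t\<^sup>2 / (2 * v)"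
    using assms by (auto simp: s_def field_simps power2_eq_square)
  have "\<bar>s\<bar> = t / v" "\<bar>- s\<bar> = t / v"
    using assms by (simp_all add: s_def)
  from mgf[OF this(1)] mgf[OF this(2)]
  have "(\<integral>\<^sup>+x. ennreal (exp (s * F x)) \<partial>M) \<le> ennreal (exp (v * s\<^sup>2 / 2))"
    and "(\<integral>\<^sup>+x. ennreal (exp (s * - F x)) \<partial>M) \<le> ennreal (exp (v * s\<^sup>2 / 2))"
    by simp_all
  from this[THEN prob_ge_le_exp_moment[OF s(1)]]
  have upper: "measure_pmf.prob M {x. t \<le> F x} \<le> exp (- t\<^sup>2 / (2 * v))"
    and "measure_pmf.prob M {x. t \<le> - F x} \<le> exp (- t\<^sup>2 / (2 * v))"
    using s(2) by (metis (no_types, lifting))+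
  moreover have "{x. t \<le> \<bar>F x\<bar>} = {x. t \<le> F x} \<union> {x. t \<le> - F x}"
    by auto
  ultimately show ?thesis
    using upper measure_Un_le[of "{x. t \<le> F x}" M "{x. t \<le> - F x}"] by simp
qed

definition randomizer_prob :: "nat \<Rightarrow> real \<Rightarrow> bool \<Rightarrow> real" where
  "randomizer_prob n lam b = (1 - lam / real n) * of_bool b + lam / (2 * real n)"

lemma randomizer_eq_bernoulli_pmf:
  assumes "0 \<le> lam" "lam \<le> real n"
  shows "randomizer n lam b = bernoulli_pmf (randomizer_prob n lam b)"
proof (rule pmf_eqI)
  have "0 \<le> lam / real n" "lam / real n \<le> 1"
    using assms by (auto simp: divide_le_eq)
  then show "pmf (randomizer n lam b) y = pmf (bernoulli_pmf (randomizer_prob n lam b)) y" for y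
    by (cases b; cases y) (auto simp: randomizer_def randomizer_prob_def pmf_bind field_simps)
qed

lemma randomizer_prob_bounds:
  assumes "0 \<le> lam" "lam \<le> real n"
  shows "0 \<le> randomizer_prob n lam b" "randomizer_prob n lam b \<le> 1"
    and "min (randomizer_prob n lam b) (1 - randomizer_prob n lam b) = lam / (2 * real n)"
proof -
  have "0 \<le> lam / (2 * real n)" "lam / (2 * real n) \<le> 1/2"
    using assms by (auto simp: divide_le_eq)
  moreover have "randomizer_prob n lam b = (if b then 1 - lam / (2 * real n) else lam / (2 * real n))"
    by (simp add: randomizer_prob_def diff_divide_distrib)
  ultimately show "0 \<le> randomizer_prob n lam b" "randomizer_prob n lam b \<le> 1"
    and "min (randomizer_prob n lam b) (1 - randomizer_prob n lam b) = lam / (2 * real n)"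
    by (auto simp: min_def)
qed

definition encoding_error :: "nat \<Rightarrow> real \<Rightarrow> bool list \<Rightarrow> real" where
  "encoding_error r x bs = sum_list (map of_bool bs) - real r * x"

lemma encoding_error_centered_bernoulli:
  assumes "0 \<le> x" "x \<le> 1"
  obtains p where "0 \<le> p" "p \<le> 1"
    and "map_pmf (encoding_error r x) (encoder r x) = map_pmf (\<lambda>b. of_bool b - p) (bernoulli_pmf p)"
proof -
  define \<mu> where "\<mu> = \<lceil>x * real r\<rceil>"
  define p where "p = x * real r - of_int \<mu> + 1"
  define g where "g = (\<lambda>j::nat. if int j < \<mu> then return_pmf True
                                else if int j = \<mu> then bernoulli_pmf p else return_pmf False)"
  have enc: "encoder r x = seq_pmf (map g [1..<r+1])"
    unfolding encoder_def g_def \<mu>_def p_def Let_def ..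
  have \<mu>: "of_int \<mu> - 1 < x * real r" "x * real r \<le> of_int \<mu>" "\<mu> \<le> int r"
    using assms by (auto simp: \<mu>_def ceiling_le_iff mult_left_le_one_le ceiling_correct)
  show ?thesis
  proof (cases "\<mu> \<le> 0")
    case True
    then have "x * real r = 0"
      using \<mu> assms by (smt (verit) mult_nonneg_nonneg of_int_le_0_iff of_nat_0_le_iff)
    moreover have "map g [1..<r+1] = map (\<lambda>_. return_pmf False) [1..<r+1]"
      using True by (auto simp: g_def)
    ultimately show ?thesis
      by (intro that[of 0])
        (auto simp: enc map_replicate_const seq_pmf_replicate_return_pmf encoding_error_def
          bernoulli_pmf_0 sum_list_replicate)
  next
    case False
    define k where "k = nat \<mu> - 1"
    have k: "int k = \<mu> - 1" "k < r"
      using False \<mu>(3) by (auto simp: k_def)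
    have "map g [1..<r+1]
        = replicate k (return_pmf True) @ bernoulli_pmf p # replicate (r - Suc k) (return_pmf False)"
      using k by (auto simp: g_def list_eq_iff_nth_eq nth_append nth_Cons' not_less)
    then have "encoder r x
        = map_pmf (\<lambda>b. replicate k True @ b # replicate (r - Suc k) False) (bernoulli_pmf p)"
      by (simp add: enc seq_pmf_append seq_pmf_replicate_return_pmf bind_return_pmf bind_assoc_pmf
          map_pmf_def)
    moreover have "x * real r = real k + p"
      using k by (simp add: p_def)
    ultimately have
      "map_pmf (encoding_error r x) (encoder r x) = map_pmf (\<lambda>b. of_bool b - p) (bernoulli_pmf p)"
      by (simp add: pmf.map_comp o_def encoding_error_def sum_list_replicate algebra_simps)
    moreover have "0 \<le> p" "p \<le> 1"
      using \<mu> by (auto simp: p_def)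
    ultimately show ?thesis
      using that by blast
  qed
qed

definition user_bits :: "nat \<Rightarrow> real \<Rightarrow> nat \<Rightarrow> real \<Rightarrow> (bool list \<times> bool list) pmf" where
  "user_bits n lam r x = do {
     bs \<leftarrow> encoder r x;
     ys \<leftarrow> seq_pmf (map (randomizer n lam) bs);
     return_pmf (bs, ys) }"

definition randomization_error :: "nat \<Rightarrow> real \<Rightarrow> bool list \<Rightarrow> bool list \<Rightarrow> real" where
  "randomization_error n lam bs ys = sum_list (map2 (\<lambda>b y. of_bool y - randomizer_prob n lam b) bs ys)"

lemma length_encoder: "bs \<in> set_pmf (encoder r x) \<Longrightarrow> length bs = r"
  unfolding encoder_def Let_def by (auto dest!: set_seq_pmf list_all2_lengthD)

lemma length_user_bits:
  assumes "(bs, ys) \<in> set_pmf (user_bits n lam r x)"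
  shows "length bs = r" "length ys = r"
  using assms by (auto simp: user_bits_def length_encoder dest!: set_seq_pmf list_all2_lengthD)

lemma mset_shuffle:
  assumes "zs \<in> set_pmf (shuffle ys)"
  shows "mset zs = mset ys"
proof -
  have "finite {\<sigma>. \<sigma> permutes {..<length ys}}" "{\<sigma>. \<sigma> permutes {..<length ys}} \<noteq> {}"
    using finite_permutations permutes_id by blast+
  then obtain \<sigma> where "\<sigma> permutes {..<length ys}" "zs = permute_list \<sigma> ys"
    using assms by (auto simp: shuffle_def permute_list_def)
  then show ?thesis
    by simp
qed

lemma analyzer_shuffle:
  "do { zs \<leftarrow> shuffle ys; return_pmf (analyzer n lam r zs) } = return_pmf (analyzer n lam r ys)"
proof -
  have "analyzer n lam r zs = analyzer n lam r ys" if "zs \<in> set_pmf (shuffle ys)" for zs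
    using arg_cong[OF mset_shuffle[OF that], of "\<lambda>M. sum_mset (image_mset (\<lambda>y. if y then 1 else 0 :: real) M)"]
    by (simp add: analyzer_def sum_mset_sum_list flip: mset_map)
  then have "do { zs \<leftarrow> shuffle ys; return_pmf (analyzer n lam r zs) }
      = do { zs \<leftarrow> shuffle ys; return_pmf (analyzer n lam r ys) }"
    by (intro bind_pmf_cong) simp_all
  then show ?thesis
    by simp
qed

lemma real_sum_protocol_eq:
  "real_sum_protocol n lam r X
     = map_pmf (\<lambda>ws. analyzer n lam r (concat (map snd ws))) (seq_pmf (map (user_bits n lam r) X))"
proof -
  have "user_msgs n lam r = (\<lambda>x. map_pmf snd (user_bits n lam r x))"
    by (rule ext)
      (simp add: user_msgs_def user_bits_def map_bind_pmf pmf.map_comp o_def map_pmf_def[symmetric])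
  then have "seq_pmf (map (user_msgs n lam r) X) = map_pmf (map snd) (seq_pmf (map (user_bits n lam r) X))"
    by (simp add: seq_pmf_map_map_pmf[symmetric] o_def)
  then show ?thesis
    by (simp add: real_sum_protocol_def analyzer_shuffle map_pmf_def bind_assoc_pmf bind_return_pmf)
qed

lemma nn_integral_exp_encoding_error_le:
  assumes "0 \<le> x" "x \<le> 1"
  shows "(\<integral>\<^sup>+bs. ennreal (exp (s * encoding_error r x bs)) \<partial>encoder r x) \<le> ennreal (exp (s\<^sup>2 / 8))"
proof -
  obtain p where p: "0 \<le> p" "p \<le> 1"
    and "map_pmf (encoding_error r x) (encoder r x) = map_pmf (\<lambda>b. of_bool b - p) (bernoulli_pmf p)"
    using encoding_error_centered_bernoulli[OF assms] by blast
  have "(\<integral>\<^sup>+bs. ennreal (exp (s * encoding_error r x bs)) \<partial>encoder r x)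
      = (\<integral>\<^sup>+e. ennreal (exp (s * e)) \<partial>map_pmf (encoding_error r x) (encoder r x))"
    by simp
  also have "\<dots> = (\<integral>\<^sup>+b. ennreal (exp (s * (of_bool b - p))) \<partial>bernoulli_pmf p)"
    unfolding \<open>map_pmf (encoding_error r x) (encoder r x) = _\<close> by simp
  also have "\<dots> \<le> ennreal (exp (s\<^sup>2 / 8))"
    using p by (rule nn_integral_bernoulli_centered_exp_le_hoeffding)
  finally show ?thesis .
qed

lemma nn_integral_exp_randomization_error_le:
  assumes "0 \<le> lam" "lam \<le> real n" "\<bar>s\<bar> \<le> 11/10"
  shows "(\<integral>\<^sup>+ys. ennreal (exp (s * randomization_error n lam bs ys)) \<partial>seq_pmf (map (randomizer n lam) bs))
           \<le> ennreal (exp (lam / (2 * real n) * s\<^sup>2)) ^ length bs"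
proof -
  have "randomizer n lam = (\<lambda>b. bernoulli_pmf (randomizer_prob n lam b))"
    using randomizer_eq_bernoulli_pmf[OF assms(1,2)] by blast
  then have "(\<integral>\<^sup>+ys. ennreal (exp (s * randomization_error n lam bs ys)) \<partial>seq_pmf (map (randomizer n lam) bs))
      = (\<integral>\<^sup>+ys. ennreal (exp (sum_list (map2 (\<lambda>b y. s * (of_bool y - randomizer_prob n lam b)) bs ys)))
           \<partial>seq_pmf (map (\<lambda>b. bernoulli_pmf (randomizer_prob n lam b)) bs))"
    by (simp add: randomization_error_def sum_list_const_mult
        split_def o_def flip: map_map)
  also have "\<dots> \<le> ennreal (exp (lam / (2 * real n) * s\<^sup>2)) ^ length bs"
    using nn_integral_bernoulli_centered_exp_le[OF randomizer_prob_bounds(1,2)[OF assms(1,2)] assms(3)]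
      randomizer_prob_bounds(3)[OF assms(1,2)]
    by (intro nn_integral_exp_sum_seq_pmf_le) simp
  finally show ?thesis .
qed

lemma nn_integral_exp_total_encoding_error_le:
  assumes "\<forall>x\<in>set X. 0 \<le> x \<and> x \<le> 1"
  shows "(\<integral>\<^sup>+ws. ennreal (exp (s * sum_list (map2 (\<lambda>x w. encoding_error r x (fst w)) X ws)))
            \<partial>seq_pmf (map (user_bits n lam r) X))
         \<le> ennreal (exp (real (length X) / 4 * s\<^sup>2 / 2))"
proof -
  have "(\<integral>\<^sup>+w. ennreal (exp (s * encoding_error r x (fst w))) \<partial>user_bits n lam r x) \<le> ennreal (exp (s\<^sup>2 / 8))"
    if "x \<in> set X" for x
  proof -
    have "(\<integral>\<^sup>+w. ennreal (exp (s * encoding_error r x (fst w))) \<partial>user_bits n lam r x)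
        = (\<integral>\<^sup>+bs. ennreal (exp (s * encoding_error r x bs)) \<partial>encoder r x)"
      by (simp add: user_bits_def measure_pmf.emeasure_space_1)
    then show ?thesis
      using nn_integral_exp_encoding_error_le assms that by simp
  qed
  then have "(\<integral>\<^sup>+ws. ennreal (exp (sum_list (map2 (\<lambda>x w. s * encoding_error r x (fst w)) X ws)))
            \<partial>seq_pmf (map (user_bits n lam r) X)) \<le> ennreal (exp (s\<^sup>2 / 8)) ^ length X"
    by (rule nn_integral_exp_sum_seq_pmf_le)
  then show ?thesis
    by (simp add: sum_list_const_mult split_def o_def ennreal_power exp_of_nat_mult[symmetric]
        field_simps flip: map_map)
qed

lemma nn_integral_exp_total_randomization_error_le:
  assumes "0 \<le> lam" "lam \<le> real n" "length X = n" "\<bar>s\<bar> \<le> 11/10"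
  shows "(\<integral>\<^sup>+ws. ennreal (exp (s * sum_list (map (case_prod (randomization_error n lam)) ws)))
            \<partial>seq_pmf (map (user_bits n lam r) X))
         \<le> ennreal (exp (lam * real r * s\<^sup>2 / 2))"
proof -
  let ?M = "seq_pmf (map (user_bits n lam r) X)"
  have "(\<integral>\<^sup>+w. ennreal (exp (s * case_prod (randomization_error n lam) w)) \<partial>user_bits n lam r x)
         \<le> ennreal (exp (lam / (2 * real n) * s\<^sup>2) ^ r)" for x
  proof -
    have "(\<integral>\<^sup>+ys. ennreal (exp (s * randomization_error n lam bs ys)) \<partial>seq_pmf (map (randomizer n lam) bs))
           \<le> ennreal (exp (lam / (2 * real n) * s\<^sup>2)) ^ r" if "bs \<in> set_pmf (encoder r x)" for bs
      using nn_integral_exp_randomization_error_le[OF assms(1,2,4), of bs] length_encoder[OF that] by simp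
    then have "(\<integral>\<^sup>+bs. \<integral>\<^sup>+ys. ennreal (exp (s * randomization_error n lam bs ys))
                   \<partial>seq_pmf (map (randomizer n lam) bs) \<partial>encoder r x)
        \<le> (\<integral>\<^sup>+bs. ennreal (exp (lam / (2 * real n) * s\<^sup>2)) ^ r \<partial>encoder r x)"
      by (intro nn_integral_mono_AE) (simp add: AE_measure_pmf_iff)
    then show ?thesis
      by (simp add: user_bits_def measure_pmf.emeasure_space_1 ennreal_power)
  qed
  note per_user = this
  have "AE ws in ?M. ennreal (exp (s * sum_list (map (case_prod (randomization_error n lam)) ws)))
      = ennreal (exp (sum_list (map2 (\<lambda>_ w. s * case_prod (randomization_error n lam) w) X ws)))"
    by (auto simp: AE_measure_pmf_iff map2_eq_map_right sum_list_const_mult o_def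
        dest!: set_seq_pmf list_all2_lengthD)
  then have "(\<integral>\<^sup>+ws. ennreal (exp (s * sum_list (map (case_prod (randomization_error n lam)) ws))) \<partial>?M)
      = (\<integral>\<^sup>+ws. ennreal (exp (sum_list (map2 (\<lambda>_ w. s * case_prod (randomization_error n lam) w) X ws))) \<partial>?M)"
    by (rule nn_integral_cong_AE)
  also have "\<dots> \<le> ennreal (exp (lam / (2 * real n) * s\<^sup>2) ^ r) ^ length X"
    using per_user by (rule nn_integral_exp_sum_seq_pmf_le)
  also have "\<dots> = ennreal (exp (lam * real r * s\<^sup>2 / 2))"
    using assms(1-3) by (auto simp: ennreal_power exp_of_nat_mult[symmetric] power_mult[symmetric] field_simps)
  finally show ?thesis .
qed

lemma sum_of_bool_randomized_eq:
  "length bs = length ys \<Longrightarrow> sum_list (map of_bool ys)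
     = randomization_error n lam bs ys + (1 - lam / real n) * sum_list (map of_bool bs)
       + real (length bs) * lam / (2 * real n)"
  by (induction bs ys rule: list_induct2)
    (simp_all add: randomization_error_def randomizer_prob_def algebra_simps add_divide_distrib)

lemma analyzer_minus_sum_eq:
  assumes "length ws = length X" "length X = n" "\<forall>(bs, ys) \<in> set ws. length bs = r \<and> length ys = r"
    and "0 < lam" "lam < real n" "0 < r"
  shows "analyzer n lam r (concat (map snd ws)) - sum_list X
           = sum_list (map2 (\<lambda>x w. encoding_error r x (fst w)) X ws) / real r
             + real n / ((real n - lam) * real r) * sum_list (map (case_prod (randomization_error n lam)) ws)"
proof -
  let ?C = "sum_list (map (\<lambda>w. sum_list (map of_bool (fst w))) ws) :: real"
  let ?R = "sum_list (map (case_prod (randomization_error n lam)) ws)"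
  have "(\<Sum>y\<leftarrow>concat yss. if y then 1 else 0) = (\<Sum>ys\<leftarrow>yss. sum_list (map of_bool ys) :: real)" for yss
    by (induction yss) (auto simp: of_bool_def)
  then have "(\<Sum>y\<leftarrow>concat (map snd ws). if y then 1 else 0) = (\<Sum>w\<leftarrow>ws. sum_list (map of_bool (snd w)) :: real)"
    by (simp add: o_def)
  also have "\<dots> = sum_list (map (\<lambda>w. case_prod (randomization_error n lam) w
                      + (1 - lam / real n) * sum_list (map of_bool (fst w)) + real r * lam / (2 * real n)) ws)"
  proof (intro arg_cong[where f = sum_list] map_cong refl)
    fix w
    assume "w \<in> set ws"
    then obtain bs ys where "w = (bs, ys)" "length bs = r" "length ys = r"
      using assms(3) by auto
    then show "sum_list (map of_bool (snd w)) = case_prod (randomization_error n lam) w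
        + (1 - lam / real n) * sum_list (map of_bool (fst w)) + real r * lam / (2 * real n)"
      using sum_of_bool_randomized_eq[of bs ys n lam] by simp
  qed
  also have "\<dots> = ?R + (1 - lam / real n) * ?C + real n * (real r * lam / (2 * real n))"
    using assms(1,2) by (simp add: sum_list_addf sum_list_const_mult sum_list_triv)
  finally have count: "(\<Sum>y\<leftarrow>concat (map snd ws). if y then 1 else 0)
      = ?R + (1 - lam / real n) * ?C + real n * (real r * lam / (2 * real n))" .
  have encoding: "sum_list (map2 (\<lambda>x w. encoding_error r x (fst w)) X ws) = ?C - real r * sum_list X"
    using assms(1) by (induction ws X rule: list_induct2) (auto simp: encoding_error_def algebra_simps)
  show ?thesis
    unfolding analyzer_def count encoding using assms(4-6) by (simp add: field_simps)
qed

lemma prob_total_encoding_error_ge: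
  assumes "\<forall>x\<in>set X. 0 \<le> x \<and> x \<le> 1" "X \<noteq> []" "0 \<le> t"
  shows "measure_pmf.prob (seq_pmf (map (user_bits n lam r) X))
           {ws. t \<le> \<bar>sum_list (map2 (\<lambda>x w. encoding_error r x (fst w)) X ws)\<bar>}
         \<le> 2 * exp (- 2 * t\<^sup>2 / length X)"
proof -
  have "0 < real (length X) / 4"
    using assms(2) by simp
  from prob_abs_ge_le_sub_gaussian[OF this assms(3) nn_integral_exp_total_encoding_error_le[OF assms(1)]]
  show ?thesis
    by (simp add: mult.commute)
qed

lemma prob_total_randomization_error_ge:
  assumes "0 < lam" "lam \<le> real n" "length X = n" "0 \<le> t" "t \<le> 11/10 * lam * r"
  shows "measure_pmf.prob (seq_pmf (map (user_bits n lam r) X))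
           {ws. t \<le> \<bar>sum_list (map (case_prod (randomization_error n lam)) ws)\<bar>}
         \<le> 2 * exp (- t\<^sup>2 / (2 * lam * r))"
proof (cases "r = 0")
  case False
  then have "0 < lam * real r"
    using assms by simp
  moreover have "\<bar>s\<bar> \<le> 11/10" if "\<bar>s\<bar> = t / (lam * real r)" for s
    using that assms \<open>0 < lam * real r\<close> by (simp add: divide_le_eq mult.assoc)
  ultimately show ?thesis
    using prob_abs_ge_le_sub_gaussian[OF \<open>0 < lam * real r\<close> assms(4)
        nn_integral_exp_total_randomization_error_le[OF less_imp_le[OF assms(1)] assms(2,3)]]
    by (simp add: mult.assoc)
qed (use assms in simp)

lemma abs_analyzer_minus_sum_le:
  assumes "ws \<in> set_pmf (seq_pmf (map (user_bits n lam r) X))"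
    and "0 < lam" "lam < real n" "0 < r" "length X = n"
  shows "\<bar>analyzer n lam r (concat (map snd ws)) - sum_list X\<bar>
           \<le> \<bar>sum_list (map2 (\<lambda>x w. encoding_error r x (fst w)) X ws)\<bar> / r
             + real n / ((real n - lam) * r) * \<bar>sum_list (map (case_prod (randomization_error n lam)) ws)\<bar>"
proof -
  have users: "list_all2 (\<lambda>w x. w \<in> set_pmf (user_bits n lam r x)) ws X"
    using set_seq_pmf[OF assms(1)] by (simp add: list_all2_map2)
  have "\<exists>x. w \<in> set_pmf (user_bits n lam r x)" if "w \<in> set ws" for w
    using that users by (auto simp: in_set_conv_nth list_all2_conv_all_nth)
  then have "\<forall>(bs, ys) \<in> set ws. length bs = r \<and> length ys = r"
    by (fastforce dest: length_user_bits)
  from analyzer_minus_sum_eq[OF list_all2_lengthD[OF users] assms(5) this assms(2-4)]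
  have "\<bar>analyzer n lam r (concat (map snd ws)) - sum_list X\<bar>
      \<le> \<bar>sum_list (map2 (\<lambda>x w. encoding_error r x (fst w)) X ws) / r\<bar>
        + \<bar>real n / ((real n - lam) * r) * sum_list (map (case_prod (randomization_error n lam)) ws)\<bar>"
    by (simp only: abs_triangle_ineq)
  moreover have "0 < real n / ((real n - lam) * r)"
    using assms(2-4) by simp
  ultimately show ?thesis
    by (simp only: abs_mult abs_divide[of _ "real r"] abs_of_nat abs_of_pos)
qed

lemma prob_real_sum_protocol_error_ge_le_error_tails:
  assumes "0 < lam" "lam < real n" "0 < r" "length X = n"
  shows "measure_pmf.prob (real_sum_protocol n lam r X)
           {y. t\<^sub>1 / r + real n / ((real n - lam) * r) * t\<^sub>2 \<le> \<bar>y - sum_list X\<bar>}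
         \<le> measure_pmf.prob (seq_pmf (map (user_bits n lam r) X))
             {ws. t\<^sub>1 \<le> \<bar>sum_list (map2 (\<lambda>x w. encoding_error r x (fst w)) X ws)\<bar>}
           + measure_pmf.prob (seq_pmf (map (user_bits n lam r) X))
             {ws. t\<^sub>2 \<le> \<bar>sum_list (map (case_prod (randomization_error n lam)) ws)\<bar>}"
    (is "measure_pmf.prob _ ?S \<le> measure_pmf.prob ?M ?A + measure_pmf.prob ?M ?B")
proof -
  let ?out = "\<lambda>ws. analyzer n lam r (concat (map snd ws))"
  define K where "K = real n / ((real n - lam) * r)"
  have "0 < K"
    using assms by (simp add: K_def)
  have "ws \<in> ?A \<union> ?B" if "ws \<in> set_pmf ?M" "?out ws \<in> ?S" for ws
  proof (rule ccontr)
    assume "ws \<notin> ?A \<union> ?B"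
    then have "\<bar>sum_list (map2 (\<lambda>x w. encoding_error r x (fst w)) X ws)\<bar> / r
        + K * \<bar>sum_list (map (case_prod (randomization_error n lam)) ws)\<bar> < t\<^sub>1 / r + K * t\<^sub>2"
      using \<open>0 < K\<close> assms(3) by (intro add_strict_mono divide_strict_right_mono mult_strict_left_mono) auto
    then show False
      using that abs_analyzer_minus_sum_le[OF that(1) assms] by (simp add: K_def)
  qed
  then have "?out -` ?S \<inter> set_pmf ?M \<subseteq> ?A \<union> ?B"
    by blast
  then have "measure_pmf.prob ?M (?out -` ?S \<inter> set_pmf ?M) \<le> measure_pmf.prob ?M (?A \<union> ?B)"
    by (intro measure_pmf.finite_measure_mono) simp_all
  also have "\<dots> \<le> measure_pmf.prob ?M ?A + measure_pmf.prob ?M ?B"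
    by (rule measure_Un_le) simp_all
  finally show ?thesis
    by (simp add: real_sum_protocol_eq measure_Int_set_pmf)
qed

lemma prob_real_sum_protocol_error_ge_le_exp:
  assumes "0 < lam" "lam < real n" "0 < r" "length X = n" "\<forall>x\<in>set X. 0 \<le> x \<and> x \<le> 1"
    and "0 \<le> t\<^sub>1" "0 \<le> t\<^sub>2" "t\<^sub>2 \<le> 11/10 * lam * r"
  shows "measure_pmf.prob (real_sum_protocol n lam r X)
           {y. t\<^sub>1 / r + real n / ((real n - lam) * r) * t\<^sub>2 \<le> \<bar>y - sum_list X\<bar>}
         \<le> 2 * exp (- 2 * t\<^sub>1\<^sup>2 / n) + 2 * exp (- t\<^sub>2\<^sup>2 / (2 * lam * r))"
proof -
  have "X \<noteq> []"
    using assms(1,2,4) by auto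
  have "measure_pmf.prob (seq_pmf (map (user_bits n lam r) X))
          {ws. t\<^sub>1 \<le> \<bar>sum_list (map2 (\<lambda>x w. encoding_error r x (fst w)) X ws)\<bar>}
        \<le> 2 * exp (- 2 * t\<^sub>1\<^sup>2 / n)"
    using prob_total_encoding_error_ge[OF assms(5) \<open>X \<noteq> []\<close> assms(6)] assms(4) by simp
  from order_trans[OF prob_real_sum_protocol_error_ge_le_error_tails[OF assms(1-4)] add_mono[OF this]]
  show ?thesis
    using prob_total_randomization_error_ge[OF assms(1) less_imp_le[OF assms(2)] assms(4,7,8)] .
qed

lemma prob_real_sum_protocol_error_ge_log_threshold:
  assumes "0 < lam" "lam < real n" "1 \<le> r" "length X = n" "\<forall>x\<in>set X. 0 \<le> x \<and> x \<le> 1"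
    and "0 \<le> L" "16/9 * L \<le> lam"
  shows "measure_pmf.prob (real_sum_protocol n lam r X)
           {y. sqrt 2 / real r * sqrt (real n * L) + real n / (real n - lam) * sqrt (2 * (lam / real r) * L)
                 \<le> \<bar>y - sum_list X\<bar>}
         \<le> 2 * exp (- L) ^ 4 + 2 * exp (- L)"
proof -
  define t\<^sub>1 where "t\<^sub>1 = sqrt 2 * sqrt (real n * L)"
  define t\<^sub>2 where "t\<^sub>2 = real r * sqrt (2 * (lam / real r) * L)"
  have "0 \<le> t\<^sub>1" "0 \<le> t\<^sub>2" and t\<^sub>1_square: "t\<^sub>1\<^sup>2 = 2 * n * L"
    using assms(1,6) by (simp_all add: t\<^sub>1_def t\<^sub>2_def power_mult_distrib)
  have "t\<^sub>2\<^sup>2 = (real r)\<^sup>2 * (2 * (lam / real r) * L)"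
    using assms(1,6) by (simp add: t\<^sub>2_def power_mult_distrib)
  also have "\<dots> = 2 * lam * r * L"
    using assms(3) by (simp add: power2_eq_square)
  finally have t\<^sub>2_square: "t\<^sub>2\<^sup>2 = 2 * lam * r * L" .
  have "lam \<le> lam * r"
    using assms(1,3) by simp
  then have "200 * L \<le> 121 * (lam * r)"
    using assms(1,7) by linarith
  then have "t\<^sub>2\<^sup>2 \<le> (11/10 * lam * r)\<^sup>2"
    using t\<^sub>2_square assms(1,3) by (simp add: power2_eq_square)
  then have "t\<^sub>2 \<le> 11/10 * lam * r"
    by (rule power2_le_imp_le) (use assms(1) in simp)
  have "sqrt 2 / real r * sqrt (real n * L) + real n / (real n - lam) * sqrt (2 * (lam / real r) * L)
      = t\<^sub>1 / r + real n / ((real n - lam) * r) * t\<^sub>2"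
    using assms(3) by (simp add: t\<^sub>1_def t\<^sub>2_def)
  moreover have "- 2 * t\<^sub>1\<^sup>2 / n = 4 * (- L)" "- t\<^sub>2\<^sup>2 / (2 * lam * r) = - L"
    using t\<^sub>1_square t\<^sub>2_square assms(1-3) by (simp_all add: field_simps)
  ultimately show ?thesis
    using prob_real_sum_protocol_error_ge_le_exp[OF _ _ _ assms(4,5) \<open>0 \<le> t\<^sub>1\<close> \<open>0 \<le> t\<^sub>2\<close>
        \<open>t\<^sub>2 \<le> _\<close>] assms(1-3)
    by (simp add: exp_of_nat_mult[of 4, symmetric])
qed

theorem theorem5p5:
  fixes \<beta> lam :: real and n r :: nat and X :: "real list"
  assumes "\<beta> > 0"
    and "0 < lam" and "lam < real n"
    and "lam \<ge> 16 / 9 * ln (2 / \<beta>)"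
    and "r \<ge> 1"
    and "length X = n" and "\<forall>x \<in> set X. 0 \<le> x \<and> x \<le> 1"
  shows "measure_pmf.prob (real_sum_protocol n lam r X)
           {y. \<bar>y - sum_list X\<bar> \<ge>
               sqrt 2 / real r * sqrt (real n * ln (2 / \<beta>))
               + real n / (real n - lam) * sqrt (2 * (lam / real r) * ln (2 / \<beta>))}
         < 2 * \<beta>"
proof (cases "\<beta> < 1")
  case False
  then show ?thesis
    by (intro le_less_trans[OF measure_pmf.prob_le_1]) simp
next
  case True
  have "0 < ln (2 / \<beta>)" and exp_log: "exp (- ln (2 / \<beta>)) = \<beta> / 2"
    using True assms(1) by (simp_all add: exp_minus)
  from prob_real_sum_protocol_error_ge_log_threshold[OF assms(2,3,5-7) less_imp_le[OF this(1)] assms(4)]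
  have "measure_pmf.prob (real_sum_protocol n lam r X)
           {y. \<bar>y - sum_list X\<bar> \<ge>
               sqrt 2 / real r * sqrt (real n * ln (2 / \<beta>))
               + real n / (real n - lam) * sqrt (2 * (lam / real r) * ln (2 / \<beta>))}
      \<le> 2 * (\<beta> / 2) ^ 4 + 2 * (\<beta> / 2)"
    unfolding exp_log .
  also have "\<dots> < 2 * \<beta>"
    using power_strict_decreasing[of 1 4 "\<beta> / 2"] True assms(1) by simp
  finally show ?thesis .
qed

end
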